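(* Let $G$ be a finite group and $\omega\in H^3(G,\mathbb{C}^\times)$ such that $\mathcal{Z}:=\mathcal{Z}(\mathrm{Vec}_G^\omega)$ has exactly three distinct twists $1,\theta,\eta$. Then either $G$ has exponent $3$ and the set of twists of $\mathcal{Z}$ is $\{1,\zeta_3,\zeta_3^2\}$, or $G$ has exponent $2$ or $4$ and the set of twists of $\mathcal{Z}$ is $\{1,\zeta_4,\zeta_4^3\}=\{1,i,-i\}$.
   Context: $\mathrm{Vec}_G^\omega$ is the fusion category of finite-dimensional $G$-graded vector spaces with associativity constraint twisted by the 3-cocycle $\omega$, with its canonical spherical structure (all simple objects of dimension $1$). $\mathcal{Z}(\mathrm{Vec}_G^\omega)$ is its Drinfeld center (twisted double), a modular fusion category; the twists are those of its simple objects. $\zeta_m=\exp(2\pi i/m)$. *)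

theory Defs
  imports "HOL-Algebra.Group" "Jordan_Normal_Form.Matrix"
begin

definition group_exponent :: "('g, 'b) monoid_scheme \<Rightarrow> nat" where
  "group_exponent G = (LEAST n. n > 0 \<and> (\<forall>x\<in>carrier G. x [^]\<^bsub>G\<^esub> n = \<one>\<^bsub>G\<^esub>))"

definition normalized_3_cocycle :: "('g, 'b) monoid_scheme \<Rightarrow> ('g \<Rightarrow> 'g \<Rightarrow> 'g \<Rightarrow> complex) \<Rightarrow> bool" where
  "normalized_3_cocycle G \<omega> \<longleftrightarrow>
     (\<forall>g\<in>carrier G. \<forall>h\<in>carrier G. \<forall>k\<in>carrier G. \<omega> g h k \<noteq> 0) \<and>
     (\<forall>g\<in>carrier G. \<forall>h\<in>carrier G. \<forall>k\<in>carrier G. \<forall>l\<in>carrier G.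
        \<omega> g h k * \<omega> g (h \<otimes>\<^bsub>G\<^esub> k) l * \<omega> h k l
        = \<omega> (g \<otimes>\<^bsub>G\<^esub> h) k l * \<omega> g h (k \<otimes>\<^bsub>G\<^esub> l)) \<and>
     (\<forall>g\<in>carrier G. \<forall>h\<in>carrier G.
        \<omega> \<one>\<^bsub>G\<^esub> g h = 1 \<and> \<omega> g \<one>\<^bsub>G\<^esub> h = 1 \<and> \<omega> g h \<one>\<^bsub>G\<^esub> = 1)"

definition centralizer_of :: "('g, 'b) monoid_scheme \<Rightarrow> 'g \<Rightarrow> 'g set" where
  "centralizer_of G a = {x \<in> carrier G. x \<otimes>\<^bsub>G\<^esub> a = a \<otimes>\<^bsub>G\<^esub> x}"

text \<open>The 2-cocycle on the centralizer of a induced by omega (twisted double).\<close>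
definition cocycle_beta :: "('g, 'b) monoid_scheme \<Rightarrow> ('g \<Rightarrow> 'g \<Rightarrow> 'g \<Rightarrow> complex) \<Rightarrow> 'g \<Rightarrow> 'g \<Rightarrow> 'g \<Rightarrow> complex" where
  "cocycle_beta G \<omega> a x y = \<omega> a x y * \<omega> x y a / \<omega> x a y"

definition proj_rep :: "('g, 'b) monoid_scheme \<Rightarrow> 'g set \<Rightarrow> ('g \<Rightarrow> 'g \<Rightarrow> complex) \<Rightarrow> nat \<Rightarrow> ('g \<Rightarrow> complex mat) \<Rightarrow> bool" where
  "proj_rep G H \<beta> n \<rho> \<longleftrightarrow> n > 0 \<and>
     (\<forall>x\<in>H. \<rho> x \<in> carrier_mat n n) \<and>
     \<rho> \<one>\<^bsub>G\<^esub> = 1\<^sub>m n \<and>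
     (\<forall>x\<in>H. \<forall>y\<in>H. \<rho> x * \<rho> y = \<beta> x y \<cdot>\<^sub>m \<rho> (x \<otimes>\<^bsub>G\<^esub> y))"

definition invariant_subspace :: "'g set \<Rightarrow> nat \<Rightarrow> ('g \<Rightarrow> complex mat) \<Rightarrow> complex vec set \<Rightarrow> bool" where
  "invariant_subspace H n \<rho> W \<longleftrightarrow> W \<subseteq> carrier_vec n \<and> 0\<^sub>v n \<in> W \<and>
     (\<forall>v\<in>W. \<forall>w\<in>W. v + w \<in> W) \<and> (\<forall>c. \<forall>v\<in>W. c \<cdot>\<^sub>v v \<in> W) \<and>
     (\<forall>x\<in>H. \<forall>v\<in>W. \<rho> x *\<^sub>v v \<in> W)"

definition irreducible_proj_rep :: "('g, 'b) monoid_scheme \<Rightarrow> 'g set \<Rightarrow> ('g \<Rightarrow> 'g \<Rightarrow> complex) \<Rightarrow> nat \<Rightarrow> ('g \<Rightarrow> complex mat) \<Rightarrow> bool" where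
  "irreducible_proj_rep G H \<beta> n \<rho> \<longleftrightarrow> proj_rep G H \<beta> n \<rho> \<and>
     (\<forall>W. invariant_subspace H n \<rho> W \<longrightarrow> W = {0\<^sub>v n} \<or> W = carrier_vec n)"

text \<open>Twists of the simple objects of Z(Vec_G^omega): simple objects are pairs (a, rho) with
  rho an irreducible beta_a-projective representation of C_G(a); the twist is the scalar
  by which rho(a) acts.\<close>
definition center_twists :: "('g, 'b) monoid_scheme \<Rightarrow> ('g \<Rightarrow> 'g \<Rightarrow> 'g \<Rightarrow> complex) \<Rightarrow> complex set" where
  "center_twists G \<omega> = {t. \<exists>a\<in>carrier G. \<exists>n \<rho>.
       irreducible_proj_rep G (centralizer_of G a) (cocycle_beta G \<omega> a) n \<rho> \<and> \<rho> a = t \<cdot>\<^sub>m 1\<^sub>m n}"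

end

theory Submission
  imports Defs "Jordan_Normal_Form.Gram_Schmidt" "HOL-Algebra.Multiplicative_Group"
begin

(*
  The twist of a simple object (a, \<rho>) of Z(Vec_G^\<omega>) is the scalar t by which \<rho>(a) acts. As \<rho> is
  \<beta>_a-projective, \<rho>(a)^j = p_a(j) \<rho>(a^j) with p_a(j) = \<Prod>_{i<j} \<beta>_a(a, a^i), so t^(ord a) = p_a(ord a).
  Conversely every root t of this equation occurs: t is an eigenvalue of a in the \<beta>_a-twisted
  regular representation of C_G(a), the t-eigenspace of a is invariant because a is central in
  C_G(a) and \<beta>_a(a, x) = \<beta>_a(x, a), and an invariant subspace of least dimension on which a acts
  by t is irreducible. So the twists over a are the ord a distinct roots of t^(ord a) = p_a(ord a).

  With three twists every element has order at most 3, and 1 is a twist. If some a has order 3,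
  its twists are all the twists, hence the cube roots of unity. This excludes elements of order 2,
  for which p_a(2) = \<omega>(a, a, a) = 1 or -1, i.e. whose twists are {1, -1} or {i, -i}. Otherwise all
  elements have order at most 2, and the only way to obtain three twists from 1 and these pairs is
  {1, i, -i}, with G of exponent 2 (exponent 4 does not occur).
*)

section \<open>Coordinates on subspaces of complex vectors\<close>

lemma smult_mat_mult_vec:
  assumes "A \<in> carrier_mat n m" "v \<in> carrier_vec m"
  shows "(k \<cdot>\<^sub>m A) *\<^sub>v v = k \<cdot>\<^sub>v (A *\<^sub>v v)"
  using assms by (intro eq_vecI) (auto simp: scalar_prod_def sum_distrib_left ac_simps)

lemma eq_matI_mult_vec:
  fixes A A' :: "'a::semiring_1 mat"
  assumes "A \<in> carrier_mat n m" "A' \<in> carrier_mat n m"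
    and "\<And>v. v \<in> carrier_vec m \<Longrightarrow> A *\<^sub>v v = A' *\<^sub>v v"
  shows "A = A'"
proof (rule eq_matI)
  fix i j assume "i < dim_row A'" "j < dim_col A'"
  moreover have "(A *\<^sub>v unit_vec m j) $ i = (A' *\<^sub>v unit_vec m j) $ i"
    using assms(3) by simp
  ultimately show "A $$ (i, j) = A' $$ (i, j)"
    using assms(1,2) by simp
qed (use assms in auto)

lemma mult_left_inverse_stable_image:
  fixes A B P :: "'a::comm_ring_1 mat"
  assumes A: "A \<in> carrier_mat k k" and B: "B \<in> carrier_mat k d" and P: "P \<in> carrier_mat d k"
    and PB: "P * B = 1\<^sub>m d"
    and stable: "\<forall>c\<in>carrier_vec d. A *\<^sub>v (B *\<^sub>v c) \<in> (\<lambda>c. B *\<^sub>v c) ` carrier_vec d"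
  shows "B * (P * (A * B)) = A * B"
proof (rule eq_matI_mult_vec)
  fix c :: "'a vec" assume c: "c \<in> carrier_vec d"
  obtain c' where c': "c' \<in> carrier_vec d" "A *\<^sub>v (B *\<^sub>v c) = B *\<^sub>v c'"
    using stable c by blast
  have "B * (P * (A * B)) *\<^sub>v c = B *\<^sub>v (P *\<^sub>v (B *\<^sub>v c'))"
    using A B P c c' assoc_mult_mat_vec[OF B _ c, of "P * (A * B)"]
      assoc_mult_mat_vec[OF P _ c, of "A * B"] assoc_mult_mat_vec[OF A B c] by simp
  also have "\<dots> = A * B *\<^sub>v c"
    using assoc_mult_mat_vec[OF P B c'(1)] PB c' assoc_mult_mat_vec[OF A B c] by simp
  finally show "B * (P * (A * B)) *\<^sub>v c = A * B *\<^sub>v c" .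
qed (use A B P in auto)

lemma image_mult_mat_vec_no_cols:
  fixes B :: "'a::semiring_0 mat"
  assumes "B \<in> carrier_mat k 0"
  shows "(\<lambda>c. B *\<^sub>v c) ` carrier_vec 0 = {0\<^sub>v k}"
proof -
  have "B *\<^sub>v c = 0\<^sub>v k" if "c \<in> carrier_vec 0" for c
    using assms that by (intro eq_vecI) (auto simp: scalar_prod_def)
  moreover have "(0\<^sub>v 0 :: 'a vec) \<in> carrier_vec 0" by simp
  ultimately show ?thesis by (auto intro!: image_eqI[where x = "0\<^sub>v 0"])
qed

lemma image_mult_mat_vec_left_invertible:
  fixes B P :: "'a::field mat"
  assumes B: "B \<in> carrier_mat k k" and P: "P \<in> carrier_mat k k" and "P * B = 1\<^sub>m k"
  shows "(\<lambda>c. B *\<^sub>v c) ` carrier_vec k = carrier_vec k"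
proof (intro equalityI subsetI)
  fix v :: "'a vec" assume v: "v \<in> carrier_vec k"
  have "B * P = 1\<^sub>m k" using mat_mult_left_right_inverse[OF P B] assms(3) .
  then have "v = B *\<^sub>v (P *\<^sub>v v)" using assoc_mult_mat_vec[OF B P v] v by simp
  then show "v \<in> (\<lambda>c. B *\<^sub>v c) ` carrier_vec k" using mult_mat_vec_carrier[OF P v] by blast
qed (use B in auto)

lemma (in vec_space) submodule_has_finite_basis:
  assumes "submodule class_ring W V"
  obtains A where "finite A" "A \<subseteq> W" "lin_indpt A" "span A = W"
proof -
  have W: "W \<subseteq> carrier_vec n"
    using assms unfolding submodule_def by auto
  let ?Q = "\<lambda>S. S \<subseteq> W \<and> lin_indpt S"
  have bounded: "finite S \<and> card S \<le> n" if "?Q S" for S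
    using li_le_dim[of S] that W dim_is_n by auto
  have "?Q {}" unfolding lin_dep_def by auto
  then obtain A where "finite A" and max: "maximal A ?Q"
    using maximal_exists[of ?Q n "{}"] bounded by blast
  then have AW: "A \<subseteq> W" and li: "lin_indpt A" unfolding maximal_def by auto
  have "W \<subseteq> span A"
  proof
    fix w assume w: "w \<in> W"
    show "w \<in> span A"
    proof (rule ccontr)
      assume w_out: "w \<notin> span A"
      then have "w \<notin> A" using in_own_span AW W by blast
      then have "?Q (insert w A)"
        using lin_dep_iff_in_span[of A w] AW W li w w_out by auto
      then show False using max \<open>w \<notin> A\<close> unfolding maximal_def by blast
    qed
  qed
  then have "span A = W" using span_is_subset[OF AW assms] by blast
  then show thesis using that \<open>finite A\<close> AW li by blast
qed

lemma left_inverse_of_orthogonal_cols: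
  fixes us :: "complex vec list"
  assumes orth: "corthogonal us" and us: "set us \<subseteq> carrier_vec k"
  shows "mat (length us) k (\<lambda>(i, j). conjugate (us ! i $ j) / (us ! i \<bullet>c us ! i))
           * mat_of_cols k us = 1\<^sub>m (length us)"
    (is "?P * ?B = _")
proof (rule eq_matI)
  fix i j assume "i < dim_row (1\<^sub>m (length us))" "j < dim_col (1\<^sub>m (length us))"
  then have i: "i < length us" and j: "j < length us" by auto
  have dim_i: "dim_vec (us ! i) = k" using us nth_mem[OF i] by auto
  have "(?P * ?B) $$ (i, j) = (\<Sum>l<k. conjugate (us ! i $ l) / (us ! i \<bullet>c us ! i) * us ! j $ l)"
    using i j by (simp add: scalar_prod_def mat_of_cols_index lessThan_atLeast0)
  also have "\<dots> = (us ! j \<bullet>c us ! i) / (us ! i \<bullet>c us ! i)"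
    using dim_i by (simp add: scalar_prod_def sum_divide_distrib lessThan_atLeast0 mult.commute)
  also have "\<dots> = 1\<^sub>m (length us) $$ (i, j)"
    using corthogonalD[OF orth] i j by auto
  finally show "(?P * ?B) $$ (i, j) = 1\<^sub>m (length us) $$ (i, j)" .
qed auto

lemma (in vec_module) span_list_eq_image_mat_of_cols:
  assumes "set ws \<subseteq> carrier_vec n"
  shows "span_list ws = (\<lambda>c. mat_of_cols n ws *\<^sub>v c) ` carrier_vec (length ws)"
proof -
  have dims: "\<forall>w\<in>set ws. dim_vec w = n" using assms by auto
  show ?thesis
  proof safe
    fix x assume "x \<in> span_list ws"
    then obtain c where "x = lincomb_list c ws" by (rule in_span_listE)
    then show "x \<in> (\<lambda>c. mat_of_cols n ws *\<^sub>v c) ` carrier_vec (length ws)"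
      using lincomb_list_as_mat_mult[OF dims] by auto
  next
    fix c :: "'a vec" assume "c \<in> carrier_vec (length ws)"
    then have "mat_of_cols n ws *\<^sub>v c = lincomb_list (\<lambda>i. c $ i) ws"
      using lincomb_list_as_mat_mult[OF dims] by (metis carrier_vecD eq_vecI index_vec dim_vec)
    then show "mat_of_cols n ws *\<^sub>v c \<in> span_list ws" by (auto intro: in_span_listI)
  qed
qed

lemma subspace_coordinates:
  fixes W :: "complex vec set"
  assumes W: "W \<subseteq> carrier_vec k" and zero: "0\<^sub>v k \<in> W"
    and add: "\<forall>v\<in>W. \<forall>w\<in>W. v + w \<in> W" and smult: "\<forall>c. \<forall>v\<in>W. c \<cdot>\<^sub>v v \<in> W"
  obtains d B P where "B \<in> carrier_mat k d" "P \<in> carrier_mat d k" "P * B = 1\<^sub>m d" "d \<le> k"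
    "W = (\<lambda>c. B *\<^sub>v c) ` carrier_vec d"
proof -
  interpret V: cof_vec_space k "TYPE(complex)" .
  have "submodule class_ring W V.V"
    by unfold_locales (use W zero add smult in auto)
  then obtain A where A: "finite A" "A \<subseteq> W" and li: "V.lin_indpt A" and span: "V.span A = W"
    by (rule V.submodule_has_finite_basis)
  obtain ws where ws: "set ws = A" "distinct ws"
    using finite_distinct_list[OF A(1)] by blast
  with A(2) W have ws_carrier: "set ws \<subseteq> carrier_vec k" by blast
  define us where "us = gram_schmidt k ws"
  note gs = V.gram_schmidt_result[OF ws_carrier ws(2) _ us_def, unfolded ws(1), OF li]
  have "length ws \<le> k"
    using V.li_le_dim[of A] A W li V.dim_is_n distinct_card[OF ws(2)] ws(1) by simp
  then have "length us \<le> k" using gs(4) by simp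
  moreover have "W = (\<lambda>c. mat_of_cols k us *\<^sub>v c) ` carrier_vec (length us)"
    using gs(1,3) span V.span_list_as_span V.span_list_eq_image_mat_of_cols by simp
  ultimately show thesis
    by (intro that[OF _ _ left_inverse_of_orthogonal_cols[OF gs(2,3)]]) auto
qed

section \<open>Projective representations\<close>

(* The column space of B is \<rho>-stable and P is a left inverse of B, so x \<mapsto> P \<rho>(x) B is the
   restriction of \<rho> to that space, written in coordinates. *)
lemma proj_rep_compression:
  fixes B P :: "complex mat"
  assumes rep: "proj_rep G H \<beta> k \<rho>" and closed: "\<forall>x\<in>H. \<forall>y\<in>H. x \<otimes>\<^bsub>G\<^esub> y \<in> H"
    and B: "B \<in> carrier_mat k d" and P: "P \<in> carrier_mat d k" and PB: "P * B = 1\<^sub>m d"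
    and "d > 0" and stable: "\<And>x. x \<in> H \<Longrightarrow> B * (P * (\<rho> x * B)) = \<rho> x * B"
  shows "proj_rep G H \<beta> d (\<lambda>x. P * (\<rho> x * B))"
proof -
  have \<rho>: "\<And>x. x \<in> H \<Longrightarrow> \<rho> x \<in> carrier_mat k k" and \<rho>_one: "\<rho> \<one>\<^bsub>G\<^esub> = 1\<^sub>m k"
    and \<rho>_mult: "\<And>x y. x \<in> H \<Longrightarrow> y \<in> H \<Longrightarrow> \<rho> x * \<rho> y = \<beta> x y \<cdot>\<^sub>m \<rho> (x \<otimes>\<^bsub>G\<^esub> y)"
    using rep unfolding proj_rep_def by auto
  have "P * (\<rho> x * B) * (P * (\<rho> y * B)) = \<beta> x y \<cdot>\<^sub>m (P * (\<rho> (x \<otimes>\<^bsub>G\<^esub> y) * B))"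
    if x: "x \<in> H" and y: "y \<in> H" for x y
  proof -
    have xB: "\<rho> x * B \<in> carrier_mat k d" and PyB: "P * (\<rho> y * B) \<in> carrier_mat d d"
      and xy: "\<rho> (x \<otimes>\<^bsub>G\<^esub> y) \<in> carrier_mat k k"
      using \<rho>[OF x] \<rho>[OF y] \<rho>[OF closed[rule_format, OF x y]] B P by auto
    have "P * (\<rho> x * B) * (P * (\<rho> y * B)) = P * (\<rho> x * (B * (P * (\<rho> y * B))))"
      using assoc_mult_mat[OF P xB PyB] assoc_mult_mat[OF \<rho>[OF x] B PyB] by simp
    also have "\<dots> = P * ((\<rho> x * \<rho> y) * B)"
      using stable[OF y] assoc_mult_mat[OF \<rho>[OF x] \<rho>[OF y] B] by simp
    also have "\<dots> = \<beta> x y \<cdot>\<^sub>m (P * (\<rho> (x \<otimes>\<^bsub>G\<^esub> y) * B))"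
      using \<rho>_mult[OF x y] mult_smult_distrib[OF P mult_carrier_mat[OF xy B]] xy B
      by (simp add: mult_smult_assoc_mat)
    finally show ?thesis .
  qed
  moreover have "P * (\<rho> \<one>\<^bsub>G\<^esub> * B) = 1\<^sub>m d" using \<rho>_one B PB by simp
  ultimately show ?thesis
    unfolding proj_rep_def using \<open>d > 0\<close> \<rho> B P by auto
qed

lemma proj_rep_on_eigen_subspace:
  assumes rep: "proj_rep G H \<beta> k \<rho>" and closed: "\<forall>x\<in>H. \<forall>y\<in>H. x \<otimes>\<^bsub>G\<^esub> y \<in> H"
    and inv: "invariant_subspace H k \<rho> W" and nonzero: "W \<noteq> {0\<^sub>v k}"
    and a: "a \<in> H" and eigen: "\<forall>w\<in>W. \<rho> a *\<^sub>v w = t \<cdot>\<^sub>v w"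
  obtains d \<sigma> where "proj_rep G H \<beta> d \<sigma>" "\<sigma> a = t \<cdot>\<^sub>m 1\<^sub>m d"
    "W \<noteq> carrier_vec k \<Longrightarrow> d < k"
proof -
  have W: "W \<subseteq> carrier_vec k" and stable: "\<And>x w. x \<in> H \<Longrightarrow> w \<in> W \<Longrightarrow> \<rho> x *\<^sub>v w \<in> W"
    using inv unfolding invariant_subspace_def by auto
  have \<rho>: "\<And>x. x \<in> H \<Longrightarrow> \<rho> x \<in> carrier_mat k k"
    using rep unfolding proj_rep_def by auto
  obtain d B P where B: "B \<in> carrier_mat k d" and P: "P \<in> carrier_mat d k" and PB: "P * B = 1\<^sub>m d"
    and "d \<le> k" and W_eq: "W = (\<lambda>c. B *\<^sub>v c) ` carrier_vec d"
    using subspace_coordinates W inv unfolding invariant_subspace_def by metis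
  have "d > 0"
  proof (rule ccontr)
    assume "\<not> d > 0"
    then show False using nonzero W_eq B image_mult_mat_vec_no_cols[of B k] by simp
  qed
  have "B * (P * (\<rho> x * B)) = \<rho> x * B" if x: "x \<in> H" for x
    using stable[OF x] W_eq by (intro mult_left_inverse_stable_image[OF \<rho>[OF x] B P PB]) auto
  then have rep': "proj_rep G H \<beta> d (\<lambda>x. P * (\<rho> x * B))"
    using proj_rep_compression[OF rep closed B P PB \<open>d > 0\<close>] by blast
  have "\<rho> a * B = t \<cdot>\<^sub>m B"
  proof (rule eq_matI_mult_vec)
    fix c :: "complex vec" assume c: "c \<in> carrier_vec d"
    have "B *\<^sub>v c \<in> W" using W_eq c by blast
    then show "\<rho> a * B *\<^sub>v c = t \<cdot>\<^sub>m B *\<^sub>v c"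
      using eigen assoc_mult_mat_vec[OF \<rho>[OF a] B c] smult_mat_mult_vec[OF B c] by simp
  qed (use B \<rho>[OF a] in auto)
  then have "P * (\<rho> a * B) = t \<cdot>\<^sub>m 1\<^sub>m d"
    using mult_smult_distrib[OF P B] PB by simp
  moreover have "d < k" if "W \<noteq> carrier_vec k"
  proof (rule ccontr)
    assume "\<not> d < k"
    then have "d = k" using \<open>d \<le> k\<close> by simp
    then show False using that W_eq B P PB image_mult_mat_vec_left_invertible[of B k P] by simp
  qed
  ultimately show thesis using that rep' by blast
qed

lemma eigenspace_invariant_subspace:
  fixes \<rho> :: "'g \<Rightarrow> complex mat"
  assumes \<rho>: "\<forall>x\<in>H. \<rho> x \<in> carrier_mat k k" and a: "a \<in> H"
    and commute: "\<forall>x\<in>H. \<rho> a * \<rho> x = \<rho> x * \<rho> a"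
  shows "invariant_subspace H k \<rho> {w \<in> carrier_vec k. \<rho> a *\<^sub>v w = t \<cdot>\<^sub>v w}"
proof -
  have \<rho>a: "\<rho> a \<in> carrier_mat k k" using \<rho> a by blast
  have "\<rho> a *\<^sub>v (\<rho> x *\<^sub>v w) = t \<cdot>\<^sub>v (\<rho> x *\<^sub>v w)"
    if x: "x \<in> H" and w: "w \<in> carrier_vec k" "\<rho> a *\<^sub>v w = t \<cdot>\<^sub>v w" for x w
  proof -
    have \<rho>x: "\<rho> x \<in> carrier_mat k k" using \<rho> x by blast
    have "\<rho> a *\<^sub>v (\<rho> x *\<^sub>v w) = \<rho> x *\<^sub>v (\<rho> a *\<^sub>v w)"
      using commute x assoc_mult_mat_vec[OF \<rho>a \<rho>x w(1)] assoc_mult_mat_vec[OF \<rho>x \<rho>a w(1)] by simp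
    then show ?thesis using w(2) mult_mat_vec[OF \<rho>x w(1)] by simp
  qed
  then show ?thesis
    using \<rho>a \<rho> unfolding invariant_subspace_def
    by (auto simp: mult_add_distrib_mat_vec mult_mat_vec smult_add_distrib_vec smult_smult_assoc
        mult.commute)
qed

lemma irreducible_proj_rep_of_least_dim:
  assumes closed: "\<forall>x\<in>H. \<forall>y\<in>H. x \<otimes>\<^bsub>G\<^esub> y \<in> H" and a: "a \<in> H"
    and rep: "proj_rep G H \<beta> k \<rho>" and scalar: "\<rho> a = t \<cdot>\<^sub>m 1\<^sub>m k"
  shows "\<exists>d \<sigma>. irreducible_proj_rep G H \<beta> d \<sigma> \<and> \<sigma> a = t \<cdot>\<^sub>m 1\<^sub>m d"
proof -
  define S where "S d \<longleftrightarrow> (\<exists>\<sigma>. proj_rep G H \<beta> d \<sigma> \<and> \<sigma> a = t \<cdot>\<^sub>m 1\<^sub>m d)" for d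
  define d where "d = (LEAST d. S d)"
  have "S d" unfolding d_def using rep scalar by (intro LeastI[of S k]) (auto simp: S_def)
  then obtain \<sigma> where \<sigma>: "proj_rep G H \<beta> d \<sigma>" and \<sigma>a: "\<sigma> a = t \<cdot>\<^sub>m 1\<^sub>m d"
    unfolding S_def by blast
  have "W = {0\<^sub>v d} \<or> W = carrier_vec d" if inv: "invariant_subspace H d \<sigma> W" for W
  proof (rule ccontr)
    assume "\<not> (W = {0\<^sub>v d} \<or> W = carrier_vec d)"
    moreover have "\<forall>w\<in>W. \<sigma> a *\<^sub>v w = t \<cdot>\<^sub>v w"
      using inv \<sigma>a smult_mat_mult_vec[of "1\<^sub>m d" d d _ t] unfolding invariant_subspace_def by auto
    ultimately obtain d' where "S d'" "d' < d"
      using proj_rep_on_eigen_subspace[OF \<sigma> closed inv _ a] unfolding S_def by metis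
    then show False unfolding d_def using not_less_Least by blast
  qed
  then show ?thesis using \<sigma> \<sigma>a unfolding irreducible_proj_rep_def by blast
qed

lemma irreducible_proj_rep_from_eigenvector:
  assumes rep: "proj_rep G H \<beta> k \<rho>" and closed: "\<forall>x\<in>H. \<forall>y\<in>H. x \<otimes>\<^bsub>G\<^esub> y \<in> H"
    and a: "a \<in> H" and commute: "\<forall>x\<in>H. \<rho> a * \<rho> x = \<rho> x * \<rho> a"
    and v: "v \<in> carrier_vec k" "v \<noteq> 0\<^sub>v k" "\<rho> a *\<^sub>v v = t \<cdot>\<^sub>v v"
  shows "\<exists>d \<sigma>. irreducible_proj_rep G H \<beta> d \<sigma> \<and> \<sigma> a = t \<cdot>\<^sub>m 1\<^sub>m d"
proof -
  let ?E = "{w \<in> carrier_vec k. \<rho> a *\<^sub>v w = t \<cdot>\<^sub>v w}"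
  have "invariant_subspace H k \<rho> ?E"
    using rep a commute unfolding proj_rep_def by (intro eigenspace_invariant_subspace) auto
  moreover have "?E \<noteq> {0\<^sub>v k}" using v by blast
  ultimately obtain d \<sigma> where "proj_rep G H \<beta> d \<sigma>" "\<sigma> a = t \<cdot>\<^sub>m 1\<^sub>m d"
    using proj_rep_on_eigen_subspace[OF rep closed _ _ a] by blast
  then show ?thesis using irreducible_proj_rep_of_least_dim[OF closed a] by blast
qed

section \<open>Centralizers and the twisted regular representation\<close>

lemma (in group) subgroup_centralizer_of:
  assumes "a \<in> carrier G"
  shows "subgroup (centralizer_of G a) G"
proof (rule subgroupI)
  show "inv x \<in> centralizer_of G a" if "x \<in> centralizer_of G a" for x
    using that assms unfolding centralizer_of_def
    by (auto simp: inv_solve_left inv_solve_right m_assoc)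
  show "x \<otimes> y \<in> centralizer_of G a"
    if "x \<in> centralizer_of G a" "y \<in> centralizer_of G a" for x y
    using that assms unfolding centralizer_of_def by (simp add: m_assoc) (metis m_assoc)
qed (use assms in \<open>auto simp: centralizer_of_def\<close>)

lemma (in group) self_in_centralizer_of: "a \<in> carrier G \<Longrightarrow> a \<in> centralizer_of G a"
  unfolding centralizer_of_def by simp

lemma (in group) pow_in_centralizer_of: "a \<in> carrier G \<Longrightarrow> a [^] (j::nat) \<in> centralizer_of G a"
  unfolding centralizer_of_def by (simp add: nat_pow_Suc2[symmetric] del: nat_pow_Suc)

(* The \<beta>-twisted left regular representation of H in the basis enumerated by e: x sends the
   basis vector of g to \<beta>(x, g) times that of x g. *)
definition twisted_regular_rep ::
    "('g, 'b) monoid_scheme \<Rightarrow> ('g \<Rightarrow> 'g \<Rightarrow> complex) \<Rightarrow> nat \<Rightarrow> (nat \<Rightarrow> 'g) \<Rightarrow> 'g \<Rightarrow> complex mat"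
  where "twisted_regular_rep G \<beta> m e x =
    mat m m (\<lambda>(i, j). if e i = x \<otimes>\<^bsub>G\<^esub> e j then \<beta> x (e j) else 0)"

lemma (in group) twisted_regular_rep_proj_rep:
  assumes H: "subgroup H G" and e: "bij_betw e {0..<m} H"
    and \<beta>_one: "\<forall>y\<in>H. \<beta> \<one> y = 1"
    and \<beta>_cocycle: "\<forall>x\<in>H. \<forall>y\<in>H. \<forall>z\<in>H. \<beta> x y * \<beta> (x \<otimes> y) z = \<beta> x (y \<otimes> z) * \<beta> y z"
  shows "proj_rep G H \<beta> m (twisted_regular_rep G \<beta> m e)"
proof -
  let ?L = "twisted_regular_rep G \<beta> m e"
  interpret H: subgroup H G by (rule H)
  have eH: "\<And>i. i < m \<Longrightarrow> e i \<in> H" and e_inj: "\<And>i j. i < m \<Longrightarrow> j < m \<Longrightarrow> e i = e j \<longleftrightarrow> i = j"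
    and e_onto: "\<And>h. h \<in> H \<Longrightarrow> \<exists>i<m. e i = h"
    using e unfolding bij_betw_def inj_on_def by (auto simp: image_iff)
  have "m > 0" using e_onto[OF H.one_closed] by auto
  have "?L \<one> = 1\<^sub>m m"
    using e_inj \<beta>_one eH H.subset by (intro eq_matI) (auto simp: twisted_regular_rep_def)
  moreover have "?L x * ?L y = \<beta> x y \<cdot>\<^sub>m ?L (x \<otimes> y)" if x: "x \<in> H" and y: "y \<in> H" for x y
  proof (rule eq_matI)
    fix i j assume "i < dim_row (\<beta> x y \<cdot>\<^sub>m ?L (x \<otimes> y))" "j < dim_col (\<beta> x y \<cdot>\<^sub>m ?L (x \<otimes> y))"
    then have i: "i < m" and j: "j < m" by (auto simp: twisted_regular_rep_def)
    obtain l where l: "l < m" "e l = y \<otimes> e j" using e_onto H.m_closed[OF y eH[OF j]] by blast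
    have "(?L x * ?L y) $$ (i, j) = (\<Sum>k = 0..<m. ?L x $$ (i, k) * ?L y $$ (k, j))"
      using i j by (simp add: twisted_regular_rep_def scalar_prod_def)
    also have "\<dots> = (\<Sum>k = 0..<m. if k = l then ?L x $$ (i, l) * \<beta> y (e j) else 0)"
      using e_inj[OF _ l(1)] l(2) j by (intro sum.cong) (auto simp: twisted_regular_rep_def)
    also have "\<dots> = ?L x $$ (i, l) * \<beta> y (e j)"
      using l by simp
    also have "\<dots> = (if e i = x \<otimes> (y \<otimes> e j) then \<beta> x (y \<otimes> e j) * \<beta> y (e j) else 0)"
      using i l by (simp add: twisted_regular_rep_def)
    also have "\<dots> = (\<beta> x y \<cdot>\<^sub>m ?L (x \<otimes> y)) $$ (i, j)"
      using i j \<beta>_cocycle x y eH[OF j] H.subset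
      by (auto simp: twisted_regular_rep_def m_assoc ac_simps)
    finally show "(?L x * ?L y) $$ (i, j) = (\<beta> x y \<cdot>\<^sub>m ?L (x \<otimes> y)) $$ (i, j)" .
  qed (auto simp: twisted_regular_rep_def)
  ultimately show ?thesis
    unfolding proj_rep_def using \<open>m > 0\<close> by (auto simp: twisted_regular_rep_def)
qed

lemma (in group) twisted_regular_rep_eigenvector:
  assumes H: "subgroup H G" and e: "bij_betw e {0..<m} H" and a: "a \<in> H"
    and f: "\<forall>g\<in>H. \<beta> a g * f g = t * f (a \<otimes> g)"
  shows "twisted_regular_rep G \<beta> m e a *\<^sub>v vec m (f \<circ> e) = t \<cdot>\<^sub>v vec m (f \<circ> e)"
proof (rule eq_vecI)
  interpret H: subgroup H G by (rule H)
  have eH: "\<And>i. i < m \<Longrightarrow> e i \<in> H" and e_inj: "\<And>i j. i < m \<Longrightarrow> j < m \<Longrightarrow> e i = e j \<longleftrightarrow> i = j"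
    and e_onto: "\<And>h. h \<in> H \<Longrightarrow> \<exists>i<m. e i = h"
    using e unfolding bij_betw_def inj_on_def by (auto simp: image_iff)
  fix i assume "i < dim_vec (t \<cdot>\<^sub>v vec m (f \<circ> e))"
  then have i: "i < m" by simp
  obtain l where l: "l < m" "e l = inv a \<otimes> e i"
    using e_onto H.m_closed[OF H.m_inv_closed[OF a] eH[OF i]] by blast
  have "e i = a \<otimes> e j \<longleftrightarrow> j = l" if "j < m" for j
    using l e_inj[OF that l(1)] inv_solve_left a eH[OF i] eH[OF that] H.subset by auto
  then have "(twisted_regular_rep G \<beta> m e a *\<^sub>v vec m (f \<circ> e)) $ i = \<beta> a (e l) * f (e l)"
    using i l by (simp add: twisted_regular_rep_def scalar_prod_def if_distrib[of "\<lambda>z. z * _"] sum.delta' cong: if_cong)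
  also have "\<dots> = t * f (e i)"
    using f eH[OF l(1)] l(2) a eH[OF i] H.subset by (auto simp: m_assoc[symmetric])
  finally show "(twisted_regular_rep G \<beta> m e a *\<^sub>v vec m (f \<circ> e)) $ i = (t \<cdot>\<^sub>v vec m (f \<circ> e)) $ i"
    using i by simp
qed (simp add: twisted_regular_rep_def)

lemma (in group) pow_eq_imp_mod_ord_eq:
  assumes "a \<in> carrier G" "a [^] (i::nat) = a [^] (j::nat)"
  shows "i mod ord a = j mod ord a"
proof -
  have "int (ord a) dvd int j - int i"
    using int_pow_eq[OF assms(1), of "int i" "int j"] assms(2) by (simp add: int_pow_int)
  then show ?thesis
    by (metis mod_eq_dvd_iff of_nat_eq_iff of_nat_mod)
qed

lemma (in group) group_exponent_eqI:
  assumes b: "b \<in> carrier G" and "ord b > 0" and dvd: "\<forall>x\<in>carrier G. ord x dvd ord b"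
  shows "group_exponent G = ord b"
  unfolding group_exponent_def
proof (rule Least_equality)
  show "0 < ord b \<and> (\<forall>x\<in>carrier G. x [^] ord b = \<one>)"
    using \<open>ord b > 0\<close> dvd pow_eq_id by blast
next
  fix n :: nat assume "0 < n \<and> (\<forall>x\<in>carrier G. x [^] n = \<one>)"
  then show "ord b \<le> n" using b pow_eq_id dvd_imp_le by blast
qed

section \<open>Twists of the twisted double\<close>

lemma cube_roots_of_unity: "{t::complex. t ^ 3 = 1} = {1, cis (2*pi/3), cis (2*pi/3) ^ 2}"
proof -
  have "{t::complex. t ^ 3 = 1} = (\<lambda>k. cis (2 * pi * real k / 3)) ` {..<3}"
    using bij_betw_roots_unity[of 3] by (simp add: bij_betw_def)
  also have "\<dots> = {1, cis (2*pi/3), cis (2*pi/3) ^ 2}"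
    by (auto simp: numeral_3_eq_3 lessThan_Suc DeMoivre)
  finally show ?thesis .
qed

lemma square_roots_of_minus_one: "{t::complex. t ^ 2 = -1} = {\<i>, -\<i>}"
  using power2_eq_iff[of _ \<i>] by auto

locale group_3_cocycle = group G for G :: "('g, 'b) monoid_scheme" (structure) +
  fixes \<omega> :: "'g \<Rightarrow> 'g \<Rightarrow> 'g \<Rightarrow> complex"
  assumes normalized_3_cocycle: "normalized_3_cocycle G \<omega>"
begin

lemma omega_nonzero:
  "x \<in> carrier G \<Longrightarrow> y \<in> carrier G \<Longrightarrow> z \<in> carrier G \<Longrightarrow> \<omega> x y z \<noteq> 0"
  using normalized_3_cocycle unfolding normalized_3_cocycle_def by blast

lemma omega_cocycle:
  "g \<in> carrier G \<Longrightarrow> h \<in> carrier G \<Longrightarrow> k \<in> carrier G \<Longrightarrow> l \<in> carrier G \<Longrightarrow>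
    \<omega> g h k * \<omega> g (h \<otimes> k) l * \<omega> h k l = \<omega> (g \<otimes> h) k l * \<omega> g h (k \<otimes> l)"
  using normalized_3_cocycle unfolding normalized_3_cocycle_def by blast

lemma omega_one [simp]:
  assumes "g \<in> carrier G" "h \<in> carrier G"
  shows "\<omega> \<one> g h = 1" "\<omega> g \<one> h = 1" "\<omega> g h \<one> = 1"
  using normalized_3_cocycle assms unfolding normalized_3_cocycle_def by blast+

lemma cocycle_beta_nonzero:
  "a \<in> carrier G \<Longrightarrow> x \<in> carrier G \<Longrightarrow> y \<in> carrier G \<Longrightarrow> cocycle_beta G \<omega> a x y \<noteq> 0"
  unfolding cocycle_beta_def by (simp add: omega_nonzero)

lemma cocycle_beta_one_left:
  "a \<in> carrier G \<Longrightarrow> y \<in> carrier G \<Longrightarrow> cocycle_beta G \<omega> a \<one> y = 1"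
  unfolding cocycle_beta_def by simp

lemma cocycle_beta_self_commute:
  "a \<in> carrier G \<Longrightarrow> x \<in> carrier G \<Longrightarrow> cocycle_beta G \<omega> a a x = cocycle_beta G \<omega> a x a"
  unfolding cocycle_beta_def by (simp add: omega_nonzero)

lemma cocycle_beta_2_cocycle:
  assumes a: "a \<in> carrier G" and xyz: "x \<in> centralizer_of G a" "y \<in> centralizer_of G a" "z \<in> centralizer_of G a"
  shows "cocycle_beta G \<omega> a x y * cocycle_beta G \<omega> a (x \<otimes> y) z
       = cocycle_beta G \<omega> a x (y \<otimes> z) * cocycle_beta G \<omega> a y z"
proof -
  have x: "x \<in> carrier G" and y: "y \<in> carrier G" and z: "z \<in> carrier G"
    and xa: "x \<otimes> a = a \<otimes> x" and ya: "y \<otimes> a = a \<otimes> y" and za: "z \<otimes> a = a \<otimes> z"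
    using xyz unfolding centralizer_of_def by auto
  \<comment> \<open>times \<omega> x y z * \<omega> x (a \<otimes> y) z, both sides are products of two cocycle identities\<close>
  have "\<omega> a x y * \<omega> x y a * \<omega> a (x \<otimes> y) z * \<omega> (x \<otimes> y) z a * \<omega> x a (y \<otimes> z) * \<omega> y a z
          * (\<omega> x y z * \<omega> x (a \<otimes> y) z)
      = (\<omega> a x y * \<omega> a (x \<otimes> y) z * \<omega> x y z) * (\<omega> x y a * \<omega> x (y \<otimes> a) z * \<omega> y a z)
          * \<omega> (x \<otimes> y) z a * \<omega> x a (y \<otimes> z)"
    using ya by (simp add: ac_simps)
  also have "\<dots> = (\<omega> (a \<otimes> x) y z * \<omega> a x (y \<otimes> z)) * (\<omega> (x \<otimes> y) a z * \<omega> x y (a \<otimes> z))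
          * \<omega> (x \<otimes> y) z a * \<omega> x a (y \<otimes> z)"
    by (simp only: omega_cocycle a x y z m_closed)
  also have "\<dots> = \<omega> a x (y \<otimes> z) * (\<omega> (x \<otimes> y) z a * \<omega> x y (z \<otimes> a))
          * (\<omega> (x \<otimes> a) y z * \<omega> x a (y \<otimes> z)) * \<omega> (x \<otimes> y) a z"
    using xa za by (simp add: ac_simps)
  also have "\<dots> = \<omega> a x (y \<otimes> z) * (\<omega> x y z * \<omega> x (y \<otimes> z) a * \<omega> y z a)
          * (\<omega> x a y * \<omega> x (a \<otimes> y) z * \<omega> a y z) * \<omega> (x \<otimes> y) a z"
    by (simp only: omega_cocycle a x y z m_closed)
  also have "\<dots> = \<omega> a x (y \<otimes> z) * \<omega> x (y \<otimes> z) a * \<omega> a y z * \<omega> y z a * \<omega> x a y * \<omega> (x \<otimes> y) a z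
          * (\<omega> x y z * \<omega> x (a \<otimes> y) z)"
    by (simp add: ac_simps)
  finally have "\<omega> a x y * \<omega> x y a * \<omega> a (x \<otimes> y) z * \<omega> (x \<otimes> y) z a * \<omega> x a (y \<otimes> z) * \<omega> y a z
      = \<omega> a x (y \<otimes> z) * \<omega> x (y \<otimes> z) a * \<omega> a y z * \<omega> y z a * \<omega> x a y * \<omega> (x \<otimes> y) a z"
    using omega_nonzero a x y z by simp
  then show ?thesis
    unfolding cocycle_beta_def using a x y z by (simp add: omega_nonzero field_simps)
qed

lemma proj_rep_self_commute:
  assumes a: "a \<in> carrier G" and rep: "proj_rep G (centralizer_of G a) (cocycle_beta G \<omega> a) k \<rho>"
    and x: "x \<in> centralizer_of G a"
  shows "\<rho> a * \<rho> x = \<rho> x * \<rho> a"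
proof -
  have \<rho>_mult: "\<And>x y. x \<in> centralizer_of G a \<Longrightarrow> y \<in> centralizer_of G a \<Longrightarrow>
      \<rho> x * \<rho> y = cocycle_beta G \<omega> a x y \<cdot>\<^sub>m \<rho> (x \<otimes> y)"
    using rep unfolding proj_rep_def by blast
  have "x \<in> carrier G" and xa: "x \<otimes> a = a \<otimes> x" using x unfolding centralizer_of_def by auto
  show ?thesis
    unfolding \<rho>_mult[OF self_in_centralizer_of[OF a] x] \<rho>_mult[OF x self_in_centralizer_of[OF a]]
      cocycle_beta_self_commute[OF a \<open>x \<in> carrier G\<close>] xa ..
qed

(* \<rho>(a)^j = twist_factor a j \<cdot> \<rho>(a^j) whenever \<rho> is a projective representation of the
   centralizer of a with cocycle \<beta>_a = cocycle_beta G \<omega> a. *)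
definition twist_factor :: "'g \<Rightarrow> nat \<Rightarrow> complex"
  where "twist_factor a j = (\<Prod>i<j. cocycle_beta G \<omega> a a (a [^] i))"

lemma twist_factor_Suc: "twist_factor a (Suc j) = twist_factor a j * cocycle_beta G \<omega> a a (a [^] j)"
  unfolding twist_factor_def by simp

lemma twist_factor_nonzero: "a \<in> carrier G \<Longrightarrow> twist_factor a j \<noteq> 0"
  unfolding twist_factor_def by (simp add: cocycle_beta_nonzero)

lemma twist_factor_add_ord:
  assumes a: "a \<in> carrier G"
  shows "twist_factor a (j + ord a) = twist_factor a j * twist_factor a (ord a)"
proof (induction j)
  case (Suc j)
  have "a [^] (j + ord a) = a [^] j" using nat_pow_mult[OF a, of j "ord a"] a by simp
  then show ?case using Suc by (simp add: twist_factor_Suc ac_simps)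
qed (simp add: twist_factor_def)

lemma proj_rep_pow_self:
  assumes a: "a \<in> carrier G"
    and rep: "proj_rep G (centralizer_of G a) (cocycle_beta G \<omega> a) k \<rho>"
    and scalar: "\<rho> a = t \<cdot>\<^sub>m 1\<^sub>m k"
  shows "twist_factor a j \<cdot>\<^sub>m \<rho> (a [^] j) = t ^ j \<cdot>\<^sub>m 1\<^sub>m k"
proof (induction j)
  case 0
  then show ?case using rep by (simp add: twist_factor_def proj_rep_def)
next
  case (Suc j)
  have a_C: "a \<in> centralizer_of G a" by (rule self_in_centralizer_of[OF a])
  have \<rho>: "\<And>x. x \<in> centralizer_of G a \<Longrightarrow> \<rho> x \<in> carrier_mat k k"
    and \<rho>_mult: "\<And>x y. x \<in> centralizer_of G a \<Longrightarrow> y \<in> centralizer_of G a \<Longrightarrow>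
      \<rho> x * \<rho> y = cocycle_beta G \<omega> a x y \<cdot>\<^sub>m \<rho> (x \<otimes> y)"
    using rep unfolding proj_rep_def by auto
  have pow: "a [^] j \<in> centralizer_of G a" by (rule pow_in_centralizer_of[OF a])
  have "twist_factor a (Suc j) \<cdot>\<^sub>m \<rho> (a [^] Suc j)
      = twist_factor a j \<cdot>\<^sub>m (cocycle_beta G \<omega> a a (a [^] j) \<cdot>\<^sub>m \<rho> (a \<otimes> a [^] j))"
    unfolding twist_factor_Suc nat_pow_Suc2[OF a] by (intro eq_matI) auto
  also have "\<dots> = \<rho> a * (twist_factor a j \<cdot>\<^sub>m \<rho> (a [^] j))"
    using \<rho>_mult[OF a_C pow] mult_smult_distrib[OF \<rho>[OF a_C] \<rho>[OF pow]] by simp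
  also have "\<dots> = t \<cdot>\<^sub>m (t ^ j \<cdot>\<^sub>m 1\<^sub>m k)"
    using Suc scalar mult_smult_assoc_mat[of "1\<^sub>m k" k k "t ^ j \<cdot>\<^sub>m 1\<^sub>m k" k t] by simp
  also have "\<dots> = t ^ Suc j \<cdot>\<^sub>m 1\<^sub>m k"
    by (intro eq_matI) auto
  finally show ?case .
qed

lemma twist_factor_div_pow_cong:
  assumes a: "a \<in> carrier G" and t: "t ^ ord a = twist_factor a (ord a)"
    and "a [^] i = a [^] j"
  shows "twist_factor a i / t ^ i = twist_factor a j / t ^ j"
proof -
  let ?n = "ord a" and ?c = "\<lambda>j. twist_factor a j / t ^ j"
  have period: "?c (j + q * ?n) = ?c j" for j q
  proof (induction q)
    case (Suc q)
    have "t ^ ?n \<noteq> 0" using t twist_factor_nonzero[OF a] by simp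
    then have "?c ((j + q * ?n) + ?n) = ?c (j + q * ?n)"
      unfolding twist_factor_add_ord[OF a] t[symmetric] by (simp add: power_add)
    then show ?case using Suc by (simp add: ac_simps)
  qed simp
  have "?c j = ?c (j mod ?n)" for j
    using period[of "j mod ?n" "j div ?n"] by (simp only: mod_div_mult_eq)
  then show ?thesis using pow_eq_imp_mod_ord_eq[OF a assms(3)] by metis
qed

lemma twist_pow_ord:
  assumes "a \<in> carrier G"
    and "proj_rep G (centralizer_of G a) (cocycle_beta G \<omega> a) k \<rho>" and "\<rho> a = t \<cdot>\<^sub>m 1\<^sub>m k"
  shows "t ^ ord a = twist_factor a (ord a)"
proof -
  have "twist_factor a (ord a) \<cdot>\<^sub>m 1\<^sub>m k = t ^ ord a \<cdot>\<^sub>m 1\<^sub>m k"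
    using proj_rep_pow_self[OF assms, of "ord a"] assms unfolding proj_rep_def by simp
  from arg_cong[OF this, of "\<lambda>A. A $$ (0, 0)"] show ?thesis
    using assms unfolding proj_rep_def by simp
qed
end

locale finite_group_3_cocycle = group_3_cocycle G \<omega>
  for G :: "('g, 'b) monoid_scheme" (structure) and \<omega> +
  assumes finite_carrier: "finite (carrier G)"
begin

lemma ord_pos: "a \<in> carrier G \<Longrightarrow> ord a > 0"
  using ord_ge_1[OF finite_carrier] by fastforce

lemma twist_eigenfunction:
  assumes a: "a \<in> carrier G" and t: "t ^ ord a = twist_factor a (ord a)"
  obtains f where "f \<one> \<noteq> 0" "\<forall>g\<in>carrier G. cocycle_beta G \<omega> a a g * f g = t * f (a \<otimes> g)"
proof -
  let ?n = "ord a" and ?c = "\<lambda>j. twist_factor a j / t ^ j"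
  have "t \<noteq> 0" using t twist_factor_nonzero[OF a] ord_pos[OF a] by (auto simp: power_0_left)
  define f where "f g = (if \<exists>j::nat. g = a [^] j then ?c (SOME j. g = a [^] j) else 0)" for g
  have f_pow: "f (a [^] j) = ?c j" for j :: nat
  proof -
    have "a [^] j = a [^] (SOME i. a [^] j = a [^] (i::nat))" by (rule someI) (rule refl)
    from twist_factor_div_pow_cong[OF a t this] show ?thesis unfolding f_def by auto
  qed
  have "cocycle_beta G \<omega> a a g * f g = t * f (a \<otimes> g)" if g: "g \<in> carrier G" for g
  proof (cases "\<exists>j::nat. g = a [^] j")
    case True
    then obtain j :: nat where j: "g = a [^] j" by blast
    have ag: "a \<otimes> g = a [^] Suc j" using j nat_pow_Suc2[OF a] by simp
    have "cocycle_beta G \<omega> a a g * f g = cocycle_beta G \<omega> a a (a [^] j) * ?c j"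
      unfolding j f_pow ..
    also have "\<dots> = t * ?c (Suc j)"
      using \<open>t \<noteq> 0\<close> by (simp add: twist_factor_Suc field_simps)
    also have "\<dots> = t * f (a \<otimes> g)"
      unfolding ag f_pow ..
    finally show ?thesis .
  next
    case False
    have "\<not> (\<exists>j::nat. a \<otimes> g = a [^] j)"
    proof
      assume "\<exists>j::nat. a \<otimes> g = a [^] j"
      then obtain j :: nat where "a \<otimes> g = a [^] j" by blast
      then have "a [^] (?n - 1 + j) = a [^] (?n - 1) \<otimes> (a \<otimes> g)"
        using nat_pow_mult[OF a] by simp
      also have "\<dots> = a [^] ?n \<otimes> g"
        using ord_pos[OF a] a g nat_pow_Suc[of a "?n - 1"] by (simp add: m_assoc[symmetric])
      finally show False using False g a by auto
    qed
    then show ?thesis using False unfolding f_def by simp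
  qed
  moreover have "f \<one> \<noteq> 0"
    using f_pow[of 0] by (simp add: twist_factor_def)
  ultimately show thesis using that by blast
qed

lemma twist_realised:
  assumes a: "a \<in> carrier G" and t: "t ^ ord a = twist_factor a (ord a)"
  shows "\<exists>k \<rho>. irreducible_proj_rep G (centralizer_of G a) (cocycle_beta G \<omega> a) k \<rho>
    \<and> \<rho> a = t \<cdot>\<^sub>m 1\<^sub>m k"
proof -
  let ?C = "centralizer_of G a" and ?\<beta> = "cocycle_beta G \<omega> a"
  have C: "subgroup ?C G" by (rule subgroup_centralizer_of[OF a])
  interpret C: subgroup ?C G by (rule C)
  have a_C: "a \<in> ?C" by (rule self_in_centralizer_of[OF a])
  have "finite ?C" using finite_carrier C.subset finite_subset by blast
  then obtain e where e: "bij_betw e {0..<card ?C} ?C" using ex_bij_betw_nat_finite by blast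
  let ?m = "card ?C"
  let ?L = "twisted_regular_rep G ?\<beta> ?m e"
  have rep: "proj_rep G ?C ?\<beta> ?m ?L"
    using C.subset cocycle_beta_one_left[OF a] cocycle_beta_2_cocycle[OF a]
    by (intro twisted_regular_rep_proj_rep[OF C e]) auto
  have closed: "\<forall>x\<in>?C. \<forall>y\<in>?C. x \<otimes> y \<in> ?C" by blast
  have commute: "\<forall>x\<in>?C. ?L a * ?L x = ?L x * ?L a"
    using proj_rep_self_commute[OF a rep] by blast
  obtain f where f_one: "f \<one> \<noteq> 0" and f: "\<forall>g\<in>carrier G. ?\<beta> a g * f g = t * f (a \<otimes> g)"
    using twist_eigenfunction[OF a t] by blast
  have eigen: "?L a *\<^sub>v vec ?m (f \<circ> e) = t \<cdot>\<^sub>v vec ?m (f \<circ> e)"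
    using f C.subset by (intro twisted_regular_rep_eigenvector[OF C e a_C]) auto
  obtain i where "i < ?m" "e i = \<one>"
    using e C.one_closed unfolding bij_betw_def by (metis atLeastLessThan_iff imageE)
  then have nonzero: "vec ?m (f \<circ> e) \<noteq> 0\<^sub>v ?m"
    using f_one by (metis comp_apply index_vec index_zero_vec(1))
  from irreducible_proj_rep_from_eigenvector[OF rep closed a_C commute _ nonzero eigen]
  show ?thesis by simp
qed

(* The twists of the simple objects supported on the conjugacy class of a. *)
definition twists_over :: "'g \<Rightarrow> complex set"
  where "twists_over a = {t. t ^ ord a = twist_factor a (ord a)}"

lemma center_twists_eq_UN: "center_twists G \<omega> = (\<Union>a\<in>carrier G. twists_over a)"
proof (intro equalityI subsetI)
  fix t assume "t \<in> center_twists G \<omega>"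
  then obtain a k \<rho> where a: "a \<in> carrier G"
    and irr: "irreducible_proj_rep G (centralizer_of G a) (cocycle_beta G \<omega> a) k \<rho>"
    and scalar: "\<rho> a = t \<cdot>\<^sub>m 1\<^sub>m k"
    unfolding center_twists_def by blast
  have "proj_rep G (centralizer_of G a) (cocycle_beta G \<omega> a) k \<rho>"
    using irr unfolding irreducible_proj_rep_def by blast
  from twist_pow_ord[OF a this scalar] have "t \<in> twists_over a"
    unfolding twists_over_def by blast
  then show "t \<in> (\<Union>a\<in>carrier G. twists_over a)" using a by blast
next
  fix t assume "t \<in> (\<Union>a\<in>carrier G. twists_over a)"
  then obtain a where a: "a \<in> carrier G" and t: "t ^ ord a = twist_factor a (ord a)"
    unfolding twists_over_def by blast
  from twist_realised[OF a t] obtain k \<rho>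
    where "irreducible_proj_rep G (centralizer_of G a) (cocycle_beta G \<omega> a) k \<rho>" "\<rho> a = t \<cdot>\<^sub>m 1\<^sub>m k"
    by blast
  with a show "t \<in> center_twists G \<omega>"
    unfolding center_twists_def by blast
qed

lemma card_twists_over: "a \<in> carrier G \<Longrightarrow> card (twists_over a) = ord a"
  unfolding twists_over_def using card_nth_roots twist_factor_nonzero ord_pos by blast

lemma finite_center_twists: "finite (center_twists G \<omega>)"
  unfolding center_twists_eq_UN twists_over_def using finite_carrier ord_pos by blast

lemma ord_le_card_center_twists:
  assumes "a \<in> carrier G"
  shows "ord a \<le> card (center_twists G \<omega>)"
proof -
  have "twists_over a \<subseteq> center_twists G \<omega>" using assms center_twists_eq_UN by blast
  from card_mono[OF finite_center_twists this] show ?thesis using card_twists_over[OF assms] by simp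
qed

lemma twists_over_one: "twists_over \<one> = {1}"
  unfolding twists_over_def twist_factor_def by (simp add: cocycle_beta_one_left)

lemma twist_factor_order_two:
  assumes a: "a \<in> carrier G" and "ord a = 2"
  shows "twist_factor a 2 = 1 \<or> twist_factor a 2 = -1"
proof -
  have aa: "a \<otimes> a = \<one>" using pow_ord_eq_1[OF a] \<open>ord a = 2\<close> a by (simp add: numeral_2_eq_2)
  have "twist_factor a 2 = \<omega> a a a"
    using a omega_nonzero[OF a a a] by (simp add: twist_factor_def numeral_2_eq_2 cocycle_beta_def)
  moreover have "\<omega> a a a * \<omega> a a a = 1"
    using omega_cocycle[OF a a a a] a by (simp add: aa)
  ultimately show ?thesis using power2_eq_1_iff[of "\<omega> a a a"] by (simp add: power2_eq_square)
qed

lemma twists_over_order_two: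
  assumes "a \<in> carrier G" and "ord a = 2"
  shows "twists_over a = {1, -1} \<or> twists_over a = {\<i>, -\<i>}"
proof -
  have "twists_over a = {t. t ^ 2 = twist_factor a 2}"
    unfolding twists_over_def \<open>ord a = 2\<close> ..
  moreover have "{t::complex. t ^ 2 = 1} = {1, -1}"
    using power2_eq_1_iff by blast
  ultimately show ?thesis
    using twist_factor_order_two[OF assms] square_roots_of_minus_one by auto
qed

lemma center_twists_if_order_3:
  assumes card: "card (center_twists G \<omega>) = 3" and b: "b \<in> carrier G" "ord b = 3"
  shows "group_exponent G = 3 \<and> center_twists G \<omega> = {1, cis (2*pi/3), cis (2*pi/3) ^ 2}"
proof -
  let ?T = "center_twists G \<omega>"
  have over: "twists_over x \<subseteq> ?T" if "x \<in> carrier G" for x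
    using center_twists_eq_UN that by blast
  have T: "twists_over b = ?T"
    using card_subset_eq[OF finite_center_twists over[OF b(1)]] card_twists_over[OF b(1)] b(2) card
    by simp
  moreover have "1 \<in> ?T" using over[OF one_closed] twists_over_one by blast
  ultimately have "1 \<in> twists_over b" by simp
  then have "twist_factor b 3 = 1" unfolding twists_over_def b(2) by simp
  with T have T_roots: "?T = {t. t ^ 3 = 1}" unfolding twists_over_def b(2) by simp
  have "ord x dvd 3" if x: "x \<in> carrier G" for x
  proof -
    have "ord x \<noteq> 2"
    proof
      assume "ord x = 2"
      then have "-1 \<in> ?T \<or> \<i> \<in> ?T" using twists_over_order_two[OF x] over[OF x] by auto
      moreover have "(-1::complex) ^ 3 \<noteq> 1" "\<i> ^ 3 \<noteq> 1" by (simp_all add: power3_eq_cube complex_eq_iff)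
      ultimately show False using T_roots by auto
    qed
    then have "ord x = 1 \<or> ord x = 3"
      using ord_pos[OF x] ord_le_card_center_twists[OF x] card by linarith
    then show ?thesis by auto
  qed
  then have "group_exponent G = 3" using group_exponent_eqI[OF b(1)] b(2) by simp
  then show ?thesis using T_roots cube_roots_of_unity by simp
qed

lemma center_twists_if_no_order_3:
  assumes card: "card (center_twists G \<omega>) = 3" and no_3: "\<forall>x\<in>carrier G. ord x \<noteq> 3"
  shows "group_exponent G = 2 \<and> center_twists G \<omega> = {1, \<i>, -\<i>}"
proof -
  let ?T = "center_twists G \<omega>"
  have ord_1_2: "ord x = 1 \<or> ord x = 2" if "x \<in> carrier G" for x
    using ord_pos[OF that] ord_le_card_center_twists[OF that] card no_3 that by fastforce
  have "\<exists>x\<in>carrier G. ord x = 2 \<and> twists_over x = {\<i>, -\<i>}"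
  proof (rule ccontr)
    assume "\<not> ?thesis"
    then have "twists_over x \<subseteq> {1, -1}" if "x \<in> carrier G" for x
      using ord_1_2[OF that] ord_eq_1[OF that] twists_over_one twists_over_order_two[OF that] that
      by auto
    then have "?T \<subseteq> {1, -1}" unfolding center_twists_eq_UN by blast
    then have "card ?T \<le> 2" using card_mono[of "{1, -1}" ?T] by (simp add: card_insert_le_m1)
    then show False using card by simp
  qed
  then obtain b where b: "b \<in> carrier G" "ord b = 2" and over_b: "twists_over b = {\<i>, -\<i>}" by blast
  have "{1, \<i>, -\<i>} \<subseteq> ?T"
    using over_b twists_over_one center_twists_eq_UN b(1) by blast
  moreover have "card {1, \<i>, -\<i>} = 3" by (simp add: complex_eq_iff)
  ultimately have "?T = {1, \<i>, -\<i>}"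
    using card card_seteq[OF finite_center_twists] by (metis order_refl)
  moreover have "group_exponent G = 2"
    using group_exponent_eqI[OF b(1)] b(2) ord_1_2 by fastforce
  ultimately show ?thesis by simp
qed

end

theorem lemma5p10:
  fixes G :: "('g, 'b) monoid_scheme" and \<omega> :: "'g \<Rightarrow> 'g \<Rightarrow> 'g \<Rightarrow> complex"
  assumes "group G" and "finite (carrier G)"
    and "normalized_3_cocycle G \<omega>"
    and "card (center_twists G \<omega>) = 3"
  shows "(group_exponent G = 3 \<and>
            center_twists G \<omega> = {1, cis (2*pi/3), cis (2*pi/3) ^ 2})
       \<or> ((group_exponent G = 2 \<or> group_exponent G = 4) \<and>
            center_twists G \<omega> = {1, \<i>, - \<i>})"
proof -
  interpret finite_group_3_cocycle G \<omega>
    by (intro finite_group_3_cocycle.intro group_3_cocycle.intro group_3_cocycle_axioms.intro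
        finite_group_3_cocycle_axioms.intro assms(1-3))
  show ?thesis
  proof (cases "\<exists>b\<in>carrier G. ord b = 3")
    case True
    then obtain b where "b \<in> carrier G" "ord b = 3" by blast
    from center_twists_if_order_3[OF assms(4) this] show ?thesis by simp
  next
    case False
    then have "\<forall>x\<in>carrier G. ord x \<noteq> 3" by blast
    from center_twists_if_no_order_3[OF assms(4) this] show ?thesis by simp
  qed
qed

end
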